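(* Let $\theta\in\mathbb{R}/\mathbb{Z}$, $\theta\neq0$, and let $\mathbb{L}_{\mathcal{R}(\theta)}$ be the prime renormalization of the rotation $\mathbb{L}_\theta$. Then \[ \mathcal{R}(\theta)=\begin{cases}\dfrac{\theta}{1-\theta}&\text{if }0\le\theta\le\frac12,\\[1ex] \dfrac{2\theta-1}{\theta}&\text{if }\frac12\le\theta\le1.\end{cases} \] Moreover, writing $\theta=[0;a_1,a_2,\dots]=1-[0;b_1,b_2,\dots]$ with all $a_i,b_i$ positive integers, we have \[ \mathcal{R}([0;a_1,a_2,\dots])=\begin{cases}[0;a_1-1,a_2,\dots]&\text{if }a_1>1,\\ 1-[0;a_2,a_3,\dots]&\text{if }a_1=1,\end{cases} \] and \[ \mathcal{R}(1-[0;b_1,b_2,\dots])=\begin{cases}1-[0;b_1-1,b_2,\dots]&\text{if }b_1>1,\\ [0;b_2,b_3,\dots]&\text{if }b_1=1.\end{cases} \]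
   Context: For $\theta\in\mathbb{R}/\mathbb{Z}$ let $\mathbb{L}_\theta:\overline{\mathbb{D}}\to\overline{\mathbb{D}}$, $z\mapsto e^{2\pi i\theta}z$, be the rotation of the closed unit disk. Assume $\theta\neq0$ and let $\mathbb{I}$ be a closed internal ray of $\overline{\mathbb{D}}$. A fundamental sector $\mathbb{Y}$ of $\mathbb{L}_\theta$ is the smallest closed sector of $\overline{\mathbb{D}}$ bounded by $\mathbb{I}$ and $\mathbb{L}_\theta(\mathbb{I})$ (if $\theta=1/2$ either sector may be taken); its angle $\omega$ at the vertex $0$ (measured in full turns) is $\theta$ if $\theta\in[0,1/2]$ and $1-\theta$ otherwise. Rotate so that $1\in\overline{\mathbb{D}}\setminus\mathbb{Y}$. Set $\mathbb{Y}_-=\mathbb{L}_\theta^{-1}(\mathbb{Y})$ and $\mathbb{Y}_+=\overline{\mathbb{D}\setminus(\mathbb{Y}\cup\mathbb{Y}_-)}$. Then $(\mathbb{L}_\theta|_{\mathbb{Y}_+},\mathbb{L}^2_\theta|_{\mathbb{Y}_-})$ is the first return map of $\mathbb{Y}_-\cup\mathbb{Y}_+$ to itself. The prime renormalization of $\mathbb{L}_\theta$ is the rotation $\mathbb{L}_{\mathcal{R}(\theta)}$ of $\overline{\mathbb{D}}$ obtained from this pair by the gluing map $\psi:\mathbb{Y}_-\cup\mathbb{Y}_+\to\overline{\mathbb{D}}$, $z\mapsto z^{1/(1-\omega)}$ (argument measured from a boundary ray of the sector $\mathbb{Y}_-\cup\mathbb{Y}_+$), which identifies the two boundary rays of this sector.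 *)

theory Defs
  imports "HOL-Analysis.Analysis"
begin

definition rot :: "real \<Rightarrow> complex \<Rightarrow> complex" where
  "rot \<theta> z = exp (2 * of_real pi * \<i> * of_real \<theta>) * z"

definition sector :: "real \<Rightarrow> real \<Rightarrow> complex set" where
  "sector \<alpha> w = {of_real r * exp (2 * of_real pi * \<i> * of_real (\<alpha> + t)) | r t.
                     0 \<le> r \<and> r \<le> 1 \<and> 0 \<le> t \<and> t \<le> w}"

text \<open>Fundamental sector: smallest closed sector bounded by the ray of angle alpha
  and its image under the rotation (for theta = 1/2 either one).  Here 0 < theta < 1.\<close>
definition fundamental_sector :: "real \<Rightarrow> real \<Rightarrow> complex set \<Rightarrow> bool" where
  "fundamental_sector \<theta> \<alpha> Y \<longleftrightarrow>
     (\<theta> \<le> 1/2 \<and> Y = sector \<alpha> \<theta>) \<or> (\<theta> \<ge> 1/2 \<and> Y = sector (\<alpha> + \<theta>) (1 - \<theta>))"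

definition sector_angle :: "real \<Rightarrow> real" where
  "sector_angle \<theta> = (if \<theta> \<le> 1/2 then \<theta> else 1 - \<theta>)"

definition rel_arg :: "real \<Rightarrow> complex \<Rightarrow> real" where
  "rel_arg \<beta> z = (THE t. 0 \<le> t \<and> t < 1 \<and>
                      z = of_real (norm z) * exp (2 * of_real pi * \<i> * of_real (\<beta> + t)))"

text \<open>Gluing map z \<mapsto> z^(1/w), argument measured from the boundary ray of angle beta.\<close>
definition glue :: "real \<Rightarrow> real \<Rightarrow> complex \<Rightarrow> complex" where
  "glue \<beta> w z = (if z = 0 then 0 else
      of_real (norm z powr (1 / w)) * exp (2 * of_real pi * \<i> * of_real (rel_arg \<beta> z / w)))"

text \<open>rho is (a rotation number of) the prime renormalization of rot theta:
  for every admissible fundamental sector, the first return map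
  (rot on Y+, rot^2 on Y-) is conjugated by the gluing map to rot rho.\<close>
definition prime_renorm :: "real \<Rightarrow> real \<Rightarrow> bool" where
  "prime_renorm \<theta> \<rho> \<longleftrightarrow>
     (\<forall>\<alpha> Y \<beta>. fundamental_sector \<theta> \<alpha> Y \<and> 1 \<notin> Y \<and>
        rot (-\<theta>) ` Y \<union> closure (ball 0 1 - (Y \<union> rot (-\<theta>) ` Y))
          = sector \<beta> (1 - sector_angle \<theta>) \<longrightarrow>
        (\<forall>z \<in> closure (ball 0 1 - (Y \<union> rot (-\<theta>) ` Y)).
            glue \<beta> (1 - sector_angle \<theta>) (rot \<theta> z) = rot \<rho> (glue \<beta> (1 - sector_angle \<theta>) z)) \<and>
        (\<forall>z \<in> rot (-\<theta>) ` Y.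
            glue \<beta> (1 - sector_angle \<theta>) (rot \<theta> (rot \<theta> z)) = rot \<rho> (glue \<beta> (1 - sector_angle \<theta>) z)))"

fun cf :: "nat list \<Rightarrow> real" where
  "cf [] = 0"
| "cf (a # as) = 1 / (real a + cf as)"

definition cf_inf_val :: "(nat \<Rightarrow> nat) \<Rightarrow> real \<Rightarrow> bool" where
  "cf_inf_val a x \<longleftrightarrow> (\<lambda>n. cf (map a [0..<n])) \<longlonglongrightarrow> x"

end

theory Submission
  imports Defs
begin

text \<open>
  In polar coordinates centred at the start \<beta> of the sector \<open>Y\<^sub>- \<union> Y\<^sub>+\<close> of angle
  \<open>w = 1 - \<omega>\<close>, the first return map is a two-interval exchange: the subsector of angle
  \<open>a\<close> at \<beta> is rotated forward by \<open>b\<close>, the following one of angle \<open>b\<close> backward by \<open>a\<close>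
  (mod 1), where \<open>a + b = w\<close>. The gluing map divides relative arguments by \<open>w\<close>, so it
  conjugates this exchange to the rotation by \<open>b / w\<close>. For \<open>\<theta> \<le> 1/2\<close> the first piece is
  \<open>Y\<^sub>+\<close> with \<open>a = 1 - 2\<theta>, b = \<theta>\<close>; for \<open>\<theta> \<ge> 1/2\<close> it is \<open>Y\<^sub>-\<close> with \<open>a = 1 - \<theta>, b = 2\<theta> - 1\<close>.
  The continued fraction identities are then arithmetic in \<open>\<theta> = 1 / (a\<^sub>1 + c)\<close>, \<open>0 \<le> c \<le> 1\<close>.
\<close>

definition cis_turn :: "real \<Rightarrow> complex" where
  "cis_turn t = exp (2 * of_real pi * \<i> * of_real t)"

lemma cis_turn_add: "cis_turn (x + y) = cis_turn x * cis_turn y"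
  unfolding cis_turn_def by (simp add: distrib_left exp_add)

lemma norm_cis_turn [simp]: "norm (cis_turn x) = 1"
  unfolding cis_turn_def by simp

lemma cis_turn_nonzero [simp]: "cis_turn x \<noteq> 0"
  unfolding cis_turn_def by simp

lemma cis_turn_eq_1_iff: "cis_turn x = 1 \<longleftrightarrow> x \<in> \<int>"
proof -
  have "cis_turn x = 1 \<longleftrightarrow> (\<exists>n::int. 2 * pi * x = 2 * n * pi)"
    unfolding cis_turn_def exp_eq_1 by (simp add: mult.commute mult.left_commute)
  also have "\<dots> \<longleftrightarrow> x \<in> \<int>"
    by (auto elim!: Ints_cases)
  finally show ?thesis .
qed

lemma cis_turn_eq_iff: "cis_turn x = cis_turn y \<longleftrightarrow> x - y \<in> \<int>"
proof -
  have "cis_turn x = cis_turn (x - y) * cis_turn y"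
    by (simp flip: cis_turn_add)
  then show ?thesis
    by (simp flip: cis_turn_eq_1_iff)
qed

lemma polar_cis_turn_exists: "\<exists>t. 0 \<le> t \<and> t < 1 \<and> z = of_real (norm z) * cis_turn (\<gamma> + t)"
proof (cases "z = 0")
  case True
  then show ?thesis by auto
next
  case False
  define t where "t = frac (Arg z / (2 * pi) - \<gamma>)"
  have "z = of_real (norm z) * cis_turn (Arg z / (2 * pi))"
    using Arg_eq[OF False] by (simp add: cis_turn_def mult.commute)
  also have "cis_turn (Arg z / (2 * pi)) = cis_turn (\<gamma> + t)"
    unfolding cis_turn_eq_iff t_def frac_def by simp
  finally show ?thesis
    unfolding t_def by (meson frac_ge_0 frac_lt_1)
qed

lemma polar_cis_turn_unique:
  assumes "0 < r" "0 \<le> r'" "of_real r * cis_turn x = of_real r' * cis_turn x'"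
  shows "r' = r" "x - x' \<in> \<int>"
proof -
  have "norm (of_real r * cis_turn x) = norm (of_real r' * cis_turn x')"
    by (simp only: assms(3))
  then show "r' = r"
    using assms(1,2) by (simp add: norm_mult)
  with assms show "x - x' \<in> \<int>"
    by (simp flip: cis_turn_eq_iff)
qed

lemma rot_cis_turn: "rot \<phi> z = cis_turn \<phi> * z"
  unfolding rot_def cis_turn_def by simp

lemma rot_polar: "rot \<phi> (of_real r * cis_turn x) = of_real r * cis_turn (x + \<phi>)"
  by (simp add: rot_cis_turn cis_turn_add)

lemma rot_rot [simp]: "rot \<phi> (rot \<psi> z) = rot (\<psi> + \<phi>) z"
  by (simp add: rot_cis_turn cis_turn_add)

lemma rot_zero [simp]: "rot \<phi> 0 = 0"
  by (simp add: rot_cis_turn)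

lemma rot_eq_rot_iff: "z \<noteq> 0 \<Longrightarrow> rot \<rho> z = rot \<sigma> z \<longleftrightarrow> \<rho> - \<sigma> \<in> \<int>"
  by (simp add: rot_cis_turn cis_turn_eq_iff)

lemma rot_cong_Ints: "\<rho> - \<sigma> \<in> \<int> \<Longrightarrow> rot \<rho> = rot \<sigma>"
  by (simp add: fun_eq_iff rot_cis_turn cis_turn_eq_iff)

lemma sector_cis_turn:
  "sector \<gamma> l = {of_real r * cis_turn (\<gamma> + t) | r t. 0 \<le> r \<and> r \<le> 1 \<and> 0 \<le> t \<and> t \<le> l}"
  unfolding sector_def cis_turn_def by simp

lemma polar_in_sector:
  "0 \<le> r \<Longrightarrow> r \<le> 1 \<Longrightarrow> 0 \<le> t \<Longrightarrow> t \<le> l \<Longrightarrow> of_real r * cis_turn (\<gamma> + t) \<in> sector \<gamma> l"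
  unfolding sector_cis_turn by blast

lemma sector_as_image:
  "sector \<gamma> l = (\<lambda>(r, t). of_real r * cis_turn (\<gamma> + t)) ` ({0..1} \<times> {0..l})"
  unfolding sector_cis_turn by (auto simp: image_iff) blast

lemma sector_cong_Ints: "\<gamma> - \<gamma>' \<in> \<int> \<Longrightarrow> sector \<gamma> l = sector \<gamma>' l"
proof -
  assume "\<gamma> - \<gamma>' \<in> \<int>"
  then have "cis_turn (\<gamma> + t) = cis_turn (\<gamma>' + t)" for t
    by (simp add: cis_turn_eq_iff)
  then show ?thesis
    unfolding sector_cis_turn by simp
qed

lemma image_rot_sector: "rot \<phi> ` sector \<gamma> l = sector (\<gamma> + \<phi>) l"
  unfolding sector_as_image image_image
  by (intro image_cong) (auto simp: rot_polar ac_simps)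

lemma sector_union:
  assumes "0 \<le> a" "0 \<le> b"
  shows "sector \<gamma> a \<union> sector (\<gamma> + a) b = sector \<gamma> (a + b)"
proof (intro equalityI subsetI)
  fix z assume "z \<in> sector \<gamma> a \<union> sector (\<gamma> + a) b"
  then show "z \<in> sector \<gamma> (a + b)"
  proof
    assume "z \<in> sector \<gamma> a"
    then obtain r t where "z = of_real r * cis_turn (\<gamma> + t)" "0 \<le> r" "r \<le> 1" "0 \<le> t" "t \<le> a"
      unfolding sector_cis_turn by blast
    then show ?thesis
      using assms by (simp add: polar_in_sector)
  next
    assume "z \<in> sector (\<gamma> + a) b"
    then obtain r t where "z = of_real r * cis_turn (\<gamma> + a + t)" "0 \<le> r" "r \<le> 1" "0 \<le> t" "t \<le> b"
      unfolding sector_cis_turn by blast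
    then show ?thesis
      using assms polar_in_sector[of r "a + t" "a + b" \<gamma>] by (simp add: add.assoc)
  qed
next
  fix z assume "z \<in> sector \<gamma> (a + b)"
  then obtain r t where z: "z = of_real r * cis_turn (\<gamma> + t)" "0 \<le> r" "r \<le> 1" "0 \<le> t" "t \<le> a + b"
    unfolding sector_cis_turn by blast
  show "z \<in> sector \<gamma> a \<union> sector (\<gamma> + a) b"
  proof (cases "t \<le> a")
    case True
    then show ?thesis using z by (simp add: polar_in_sector)
  next
    case False
    then have "z \<in> sector (\<gamma> + a) b"
      using polar_in_sector[of r "t - a" b "\<gamma> + a"] z by simp
    then show ?thesis by blast
  qed
qed

lemma closed_sector: "closed (sector \<gamma> l)"
proof -
  have "continuous_on ({0..1} \<times> {0..l}) (\<lambda>(r, t). of_real r * cis_turn (\<gamma> + t))"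
    unfolding cis_turn_def case_prod_unfold by (intro continuous_intros)
  then show ?thesis
    unfolding sector_as_image
    by (intro compact_imp_closed compact_continuous_image compact_Times compact_Icc)
qed

lemma one_notin_sector:
  assumes "0 < \<gamma>" "0 \<le> l" "\<gamma> + l < 1"
  shows "1 \<notin> sector \<gamma> l"
proof
  assume "1 \<in> sector \<gamma> l"
  then obtain r t where rt: "of_real 1 * cis_turn 0 = of_real r * cis_turn (\<gamma> + t)" "0 \<le> r" "0 \<le> t" "t \<le> l"
    unfolding sector_cis_turn by (auto simp: cis_turn_def)
  then have "0 - (\<gamma> + t) \<in> \<int>"
    by (intro polar_cis_turn_unique(2)[OF _ _ rt(1)]) auto
  moreover have "\<bar>0 - (\<gamma> + t)\<bar> < 1"
    using assms rt by auto
  ultimately show False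
    using Ints_nonzero_abs_less1 assms rt by fastforce
qed

lemma closure_disc_diff_sector_subset:
  assumes "0 \<le> l"
  shows "closure (ball 0 1 - sector \<gamma> l) \<subseteq> sector (\<gamma> + l) (1 - l)"
proof (rule closure_minimal[OF _ closed_sector], rule subsetI)
  fix z assume z: "z \<in> ball 0 1 - sector \<gamma> l"
  obtain t where t: "0 \<le> t" "t < 1" "z = of_real (norm z) * cis_turn (\<gamma> + t)"
    using polar_cis_turn_exists by blast
  have "\<not> t \<le> l"
    using z t polar_in_sector[of "norm z" t l \<gamma>] by auto
  then show "z \<in> sector (\<gamma> + l) (1 - l)"
    using z t polar_in_sector[of "norm z" "t - l" "1 - l" "\<gamma> + l"] by simp
qed

lemma closure_disc_diff_sector:
  assumes "0 < l" "l < 1"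
  shows "closure (ball 0 1 - sector \<gamma> l) = sector (\<gamma> + l) (1 - l)"
proof
  show "closure (ball 0 1 - sector \<gamma> l) \<subseteq> sector (\<gamma> + l) (1 - l)"
    using assms by (intro closure_disc_diff_sector_subset) simp
next
  define f where "f = (\<lambda>(r, t). of_real r * cis_turn (\<gamma> + l + t))"
  define A where "A = {0<..<1::real} \<times> {0<..<1 - l}"
  have "f ` A \<subseteq> ball 0 1 - sector \<gamma> l"
  proof
    fix z assume "z \<in> f ` A"
    then obtain r t where rt: "0 < r" "r < 1" "0 < t" "t < 1 - l" "z = of_real r * cis_turn (\<gamma> + (l + t))"
      unfolding A_def f_def by (auto simp: add.assoc)
    have "z \<notin> sector \<gamma> l"
    proof
      assume "z \<in> sector \<gamma> l"
      then obtain r' u where ru: "z = of_real r' * cis_turn (\<gamma> + u)" "0 \<le> r'" "0 \<le> u" "u \<le> l"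
        unfolding sector_cis_turn by blast
      have "of_real r * cis_turn (\<gamma> + (l + t)) = of_real r' * cis_turn (\<gamma> + u)"
        using rt ru by simp
      then have "(\<gamma> + (l + t)) - (\<gamma> + u) \<in> \<int>"
        using polar_cis_turn_unique(2) rt ru by blast
      moreover have "\<bar>(\<gamma> + (l + t)) - (\<gamma> + u)\<bar> < 1"
        using rt ru by auto
      ultimately show False
        using Ints_nonzero_abs_less1 rt ru by fastforce
    qed
    with rt show "z \<in> ball 0 1 - sector \<gamma> l"
      by (simp add: norm_mult)
  qed
  moreover have "continuous_on (closure A) f"
    unfolding f_def cis_turn_def case_prod_unfold by (intro continuous_intros)
  ultimately have "f ` closure A \<subseteq> closure (ball 0 1 - sector \<gamma> l)"
    by (intro image_closure_subset) (auto intro: subsetD[OF closure_subset])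
  moreover have "closure A = {0..1} \<times> {0..1 - l}"
    unfolding A_def closure_Times using assms by simp
  ultimately show "sector (\<gamma> + l) (1 - l) \<subseteq> closure (ball 0 1 - sector \<gamma> l)"
    unfolding f_def sector_as_image by simp
qed

lemma sector_subset_imp_Ints:
  assumes "sector \<beta> w \<subseteq> sector \<beta>' w" "0 < w" "w < 1"
  shows "\<beta> - \<beta>' \<in> \<int>"
proof (rule ccontr)
  assume not_Ints: "\<beta> - \<beta>' \<notin> \<int>"
  define d where "d = frac (\<beta> - \<beta>')"
  have d: "0 < d" "d < 1"
    using not_Ints frac_lt_1 by (simp_all add: d_def)
  have d_Ints: "\<beta> - \<beta>' - d \<in> \<int>"
    unfolding d_def frac_def by simp
  \<comment> \<open>an angle of the first sector that, measured from \<beta>', lies strictly between w and 1\<close>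
  define s where "s = (max 0 (w - d) + min w (1 - d)) / 2"
  have s: "0 \<le> s" "s \<le> w" "w < d + s" "d + s < 1"
    using d assms unfolding s_def by (auto simp: max_def min_def field_simps)
  then have "of_real 1 * cis_turn (\<beta> + s) \<in> sector \<beta>' w"
    using assms(1) polar_in_sector[of 1 s w \<beta>] by auto
  then obtain r u where ru: "of_real 1 * cis_turn (\<beta> + s) = of_real r * cis_turn (\<beta>' + u)"
      "0 \<le> r" "0 \<le> u" "u \<le> w"
    unfolding sector_cis_turn by blast
  have "(\<beta> + s) - (\<beta>' + u) \<in> \<int>"
    using polar_cis_turn_unique(2)[OF _ ru(2,1)] by simp
  moreover have "d + s - u = ((\<beta> + s) - (\<beta>' + u)) - (\<beta> - \<beta>' - d)"
    by simp
  ultimately have "d + s - u \<in> \<int>"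
    using d_Ints by (metis Ints_diff)
  moreover have "0 < d + s - u" "d + s - u < 1"
    using s ru by auto
  ultimately show False
    using Ints_nonzero_abs_less1 by fastforce
qed

lemma rel_arg_polar:
  assumes "0 < r" "0 \<le> t" "t < 1"
  shows "rel_arg \<beta> (of_real r * cis_turn (\<beta> + t)) = t"
  unfolding rel_arg_def
proof (rule the_equality)
  show "0 \<le> t \<and> t < 1 \<and> of_real r * cis_turn (\<beta> + t) =
      of_real (norm (of_real r * cis_turn (\<beta> + t))) * exp (2 * of_real pi * \<i> * of_real (\<beta> + t))"
    using assms by (simp add: norm_mult cis_turn_def)
next
  fix t' assume t': "0 \<le> t' \<and> t' < 1 \<and> of_real r * cis_turn (\<beta> + t) =
      of_real (norm (of_real r * cis_turn (\<beta> + t))) * exp (2 * of_real pi * \<i> * of_real (\<beta> + t'))"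
  then have "(\<beta> + t) - (\<beta> + t') \<in> \<int>"
    using assms by (intro polar_cis_turn_unique(2)[of r r]) (auto simp: norm_mult cis_turn_def)
  moreover have "\<bar>(\<beta> + t) - (\<beta> + t')\<bar> < 1"
    using assms t' by auto
  ultimately show "t' = t"
    using Ints_nonzero_abs_less1 by fastforce
qed

lemma glue_polar:
  assumes "0 < r" "0 \<le> t" "t < 1"
  shows "glue \<beta> w (of_real r * cis_turn (\<beta> + t)) = of_real (r powr (1 / w)) * cis_turn (t / w)"
  using assms rel_arg_polar[OF assms]
  by (simp add: glue_def cis_turn_def norm_mult)

lemma glue_zero [simp]: "glue \<beta> w 0 = 0"
  unfolding glue_def by simp

lemma glue_rot_sector:
  assumes "z \<in> sector (\<beta> + c) l" "0 \<le> c" "c + l < 1" "0 \<le> c + d" "c + l + d < 1" "\<phi> - d \<in> \<int>"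
  shows "glue \<beta> w (rot \<phi> z) = rot (d / w) (glue \<beta> w z)"
proof -
  obtain r s where rs: "z = of_real r * cis_turn (\<beta> + (c + s))" "0 \<le> r" "0 \<le> s" "s \<le> l"
    using assms(1) unfolding sector_cis_turn by (auto simp: add.assoc)
  show ?thesis
  proof (cases "r = 0")
    case True
    then show ?thesis using rs by simp
  next
    case False
    have "rot \<phi> z = of_real r * cis_turn (\<beta> + (c + s + d))"
      unfolding rs rot_polar using assms(6) by (simp add: cis_turn_eq_iff algebra_simps)
    moreover have "(c + s + d) / w = (c + s) / w + d / w"
      by (simp add: add_divide_distrib)
    ultimately show ?thesis
      using False rs assms by (simp add: glue_polar rot_polar)
  qed
qed

lemma glue_exchange_conj_iff:
  assumes "0 \<le> a" "0 \<le> b" "a + b = w" "0 < w" "w < 1" "\<phi> - b \<in> \<int>" "\<psi> + a \<in> \<int>"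
    and "S \<subseteq> sector (\<beta> + a) b"
  shows "(\<forall>z \<in> sector \<beta> a. glue \<beta> w (rot \<phi> z) = rot \<rho> (glue \<beta> w z)) \<and>
         (\<forall>z \<in> S. glue \<beta> w (rot \<psi> z) = rot \<rho> (glue \<beta> w z))
     \<longleftrightarrow> \<rho> - b / w \<in> \<int>"
proof -
  have first: "glue \<beta> w (rot \<phi> z) = rot (b / w) (glue \<beta> w z)" if "z \<in> sector \<beta> a" for z
    using that assms by (intro glue_rot_sector[where c = 0 and l = a]) auto
  have second: "glue \<beta> w (rot \<psi> z) = rot (- a / w) (glue \<beta> w z)" if "z \<in> S" for z
    using that assms by (intro glue_rot_sector[where c = a and l = b]) auto
  have "rot (b / w) = rot (- a / w)"
    using assms(3,4) by (intro rot_cong_Ints) (simp add: add_divide_distrib[symmetric] add.commute)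
  moreover have "cis_turn \<beta> \<in> sector \<beta> a"
    using polar_in_sector[of 1 0 a \<beta>] assms by simp
  moreover have "glue \<beta> w (cis_turn \<beta>) = 1"
    using glue_polar[of 1 0 \<beta> w] by (simp add: cis_turn_def)
  ultimately show ?thesis
  proof (intro iffI)
    assume "(\<forall>z \<in> sector \<beta> a. glue \<beta> w (rot \<phi> z) = rot \<rho> (glue \<beta> w z)) \<and>
      (\<forall>z \<in> S. glue \<beta> w (rot \<psi> z) = rot \<rho> (glue \<beta> w z))"
    with first \<open>cis_turn \<beta> \<in> sector \<beta> a\<close>
    have "rot \<rho> (glue \<beta> w (cis_turn \<beta>)) = rot (b / w) (glue \<beta> w (cis_turn \<beta>))"
      by metis
    then show "\<rho> - b / w \<in> \<int>"
      using \<open>glue \<beta> w (cis_turn \<beta>) = 1\<close> by (simp add: rot_eq_rot_iff)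
  next
    assume "\<rho> - b / w \<in> \<int>"
    then have "rot \<rho> = rot (b / w)"
      by (rule rot_cong_Ints)
    then show "(\<forall>z \<in> sector \<beta> a. glue \<beta> w (rot \<phi> z) = rot \<rho> (glue \<beta> w z)) \<and>
      (\<forall>z \<in> S. glue \<beta> w (rot \<psi> z) = rot \<rho> (glue \<beta> w z))"
      using first second \<open>rot (b / w) = rot (- a / w)\<close> by simp
  qed
qed

lemma prime_renorm_iffI:
  assumes "1 - sector_angle \<theta> = w"
    and "fundamental_sector \<theta> \<alpha>\<^sub>0 Y\<^sub>0" "1 \<notin> Y\<^sub>0"
      "rot (-\<theta>) ` Y\<^sub>0 \<union> closure (ball 0 1 - (Y\<^sub>0 \<union> rot (-\<theta>) ` Y\<^sub>0)) = sector \<beta>\<^sub>0 w"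
    and "\<And>\<alpha> Y \<beta>. fundamental_sector \<theta> \<alpha> Y \<Longrightarrow>
      rot (-\<theta>) ` Y \<union> closure (ball 0 1 - (Y \<union> rot (-\<theta>) ` Y)) = sector \<beta> w \<Longrightarrow>
      (\<forall>z \<in> closure (ball 0 1 - (Y \<union> rot (-\<theta>) ` Y)). glue \<beta> w (rot \<theta> z) = rot \<rho> (glue \<beta> w z)) \<and>
      (\<forall>z \<in> rot (-\<theta>) ` Y. glue \<beta> w (rot \<theta> (rot \<theta> z)) = rot \<rho> (glue \<beta> w z))
      \<longleftrightarrow> P"
  shows "prime_renorm \<theta> \<rho> \<longleftrightarrow> P"
proof
  assume "prime_renorm \<theta> \<rho>"
  then show P
    using assms(2-4) assms(5)[OF assms(2,4)] unfolding prime_renorm_def assms(1) by blast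
next
  assume P
  then show "prime_renorm \<theta> \<rho>"
    using assms(5) unfolding prime_renorm_def assms(1) by blast
qed

lemma first_return_sectors_less_half:
  assumes "0 < \<theta>" "\<theta> < 1/2"
  shows "rot (-\<theta>) ` sector \<alpha> \<theta> = sector (\<alpha> + \<theta> + (1 - 2 * \<theta>)) \<theta>"
    and "closure (ball 0 1 - (sector \<alpha> \<theta> \<union> rot (-\<theta>) ` sector \<alpha> \<theta>))
           = sector (\<alpha> + \<theta>) (1 - 2 * \<theta>)"
proof -
  have Ym: "rot (-\<theta>) ` sector \<alpha> \<theta> = sector (\<alpha> - \<theta>) \<theta>"
    using image_rot_sector[of "-\<theta>" \<alpha> \<theta>] by simp
  then show "rot (-\<theta>) ` sector \<alpha> \<theta> = sector (\<alpha> + \<theta> + (1 - 2 * \<theta>)) \<theta>"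
    by (simp add: sector_cong_Ints)
  have "sector \<alpha> \<theta> \<union> rot (-\<theta>) ` sector \<alpha> \<theta> = sector (\<alpha> - \<theta>) (2 * \<theta>)"
    using Ym sector_union[of \<theta> \<theta> "\<alpha> - \<theta>"] assms by (simp add: Un_commute)
  then show "closure (ball 0 1 - (sector \<alpha> \<theta> \<union> rot (-\<theta>) ` sector \<alpha> \<theta>))
      = sector (\<alpha> + \<theta>) (1 - 2 * \<theta>)"
    using closure_disc_diff_sector[of "2 * \<theta>" "\<alpha> - \<theta>"] assms by (simp add: add.commute)
qed

text \<open>For \<open>\<theta> = 1/2\<close> the set \<open>Y\<^sub>+\<close> is empty, not the ray \<open>sector (\<alpha> + 1/2) 0\<close>; hence only an inclusion.\<close>
lemma first_return_sectors_ge_half: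
  assumes "1/2 \<le> \<theta>" "\<theta> < 1"
  shows "rot (-\<theta>) ` sector (\<alpha> + \<theta>) (1 - \<theta>) = sector \<alpha> (1 - \<theta>)"
    and "closure (ball 0 1 - (sector (\<alpha> + \<theta>) (1 - \<theta>) \<union> rot (-\<theta>) ` sector (\<alpha> + \<theta>) (1 - \<theta>)))
           \<subseteq> sector (\<alpha> + (1 - \<theta>)) (2 * \<theta> - 1)"
    and "rot (-\<theta>) ` sector (\<alpha> + \<theta>) (1 - \<theta>)
           \<union> closure (ball 0 1 - (sector (\<alpha> + \<theta>) (1 - \<theta>) \<union> rot (-\<theta>) ` sector (\<alpha> + \<theta>) (1 - \<theta>)))
         = sector \<alpha> \<theta>"
proof -
  let ?Y = "sector (\<alpha> + \<theta>) (1 - \<theta>)"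
  let ?Yp = "closure (ball 0 1 - (?Y \<union> rot (-\<theta>) ` ?Y))"
  show Ym: "rot (-\<theta>) ` ?Y = sector \<alpha> (1 - \<theta>)"
    using image_rot_sector[of "-\<theta>" "\<alpha> + \<theta>" "1 - \<theta>"] by simp
  have "sector \<alpha> (1 - \<theta>) = sector (\<alpha> + \<theta> + (1 - \<theta>)) (1 - \<theta>)"
    by (simp add: sector_cong_Ints)
  then have YYm: "?Y \<union> rot (-\<theta>) ` ?Y = sector (\<alpha> + \<theta>) (2 - 2 * \<theta>)"
    using Ym sector_union[of "1 - \<theta>" "1 - \<theta>" "\<alpha> + \<theta>"] assms by simp
  have shift: "sector (\<alpha> + \<theta> + (2 - 2 * \<theta>)) = sector (\<alpha> + (1 - \<theta>))"
    by (intro ext sector_cong_Ints) simp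
  show Yp: "?Yp \<subseteq> sector (\<alpha> + (1 - \<theta>)) (2 * \<theta> - 1)"
    using closure_disc_diff_sector_subset[of "2 - 2 * \<theta>" "\<alpha> + \<theta>"] assms
    unfolding YYm shift by simp
  have parts: "sector \<alpha> (1 - \<theta>) \<union> sector (\<alpha> + (1 - \<theta>)) (2 * \<theta> - 1) = sector \<alpha> \<theta>"
    using sector_union[of "1 - \<theta>" "2 * \<theta> - 1" \<alpha>] assms by simp
  show "rot (-\<theta>) ` ?Y \<union> ?Yp = sector \<alpha> \<theta>"
  proof (cases "\<theta> = 1/2")
    case True
    then have "sector \<alpha> \<theta> = rot (-\<theta>) ` ?Y"
      using Ym unfolding True by simp
    then show ?thesis
      using Yp parts by blast
  next
    case False
    then have "?Yp = sector (\<alpha> + (1 - \<theta>)) (2 * \<theta> - 1)"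
      using closure_disc_diff_sector[of "2 - 2 * \<theta>" "\<alpha> + \<theta>"] assms
      unfolding YYm shift by simp
    then show ?thesis
      using Ym parts by simp
  qed
qed

lemma prime_renorm_less_half:
  assumes "0 < \<theta>" "\<theta> < 1/2"
  shows "prime_renorm \<theta> \<rho> \<longleftrightarrow> \<rho> - \<theta> / (1 - \<theta>) \<in> \<int>"
proof -
  note Ym = first_return_sectors_less_half(1)[OF assms] and Yp = first_return_sectors_less_half(2)[OF assms]
  have union: "rot (-\<theta>) ` sector \<alpha> \<theta> \<union> closure (ball 0 1 - (sector \<alpha> \<theta> \<union> rot (-\<theta>) ` sector \<alpha> \<theta>))
      = sector (\<alpha> + \<theta>) (1 - \<theta>)" for \<alpha>
    using sector_union[of "1 - 2 * \<theta>" \<theta> "\<alpha> + \<theta>"] assms unfolding Yp unfolding Ym by (simp add: Un_commute)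
  have conj_iff:
    "(\<forall>z \<in> closure (ball 0 1 - (Y \<union> rot (-\<theta>) ` Y)). glue \<beta> (1 - \<theta>) (rot \<theta> z) = rot \<rho> (glue \<beta> (1 - \<theta>) z)) \<and>
     (\<forall>z \<in> rot (-\<theta>) ` Y. glue \<beta> (1 - \<theta>) (rot \<theta> (rot \<theta> z)) = rot \<rho> (glue \<beta> (1 - \<theta>) z))
     \<longleftrightarrow> \<rho> - \<theta> / (1 - \<theta>) \<in> \<int>"
    if fs: "fundamental_sector \<theta> \<alpha> Y"
      and admissible: "rot (-\<theta>) ` Y \<union> closure (ball 0 1 - (Y \<union> rot (-\<theta>) ` Y)) = sector \<beta> (1 - \<theta>)"
    for \<alpha> Y \<beta>
  proof -
    have Y: "Y = sector \<alpha> \<theta>"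
      using fs assms by (simp add: fundamental_sector_def)
    then have "\<alpha> + \<theta> - \<beta> \<in> \<int>"
      using admissible union assms by (intro sector_subset_imp_Ints[of _ "1 - \<theta>"]) auto
    then have "sector (\<alpha> + \<theta>) = sector \<beta>" "sector (\<alpha> + \<theta> + (1 - 2 * \<theta>)) = sector (\<beta> + (1 - 2 * \<theta>))"
      by (auto intro!: ext sector_cong_Ints simp: algebra_simps)
    then show ?thesis
      using glue_exchange_conj_iff[of "1 - 2 * \<theta>" \<theta> "1 - \<theta>" \<theta> "\<theta> + \<theta>" "rot (-\<theta>) ` Y" \<beta> \<rho>] assms
      unfolding Y unfolding Yp unfolding Ym by simp
  qed
  define \<alpha> where "\<alpha> = (1 - \<theta>) / 2"
  have "1 - sector_angle \<theta> = 1 - \<theta>"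
    using assms by (simp add: sector_angle_def)
  moreover have "fundamental_sector \<theta> \<alpha> (sector \<alpha> \<theta>)"
    using assms by (simp add: fundamental_sector_def)
  moreover have "1 \<notin> sector \<alpha> \<theta>"
    using assms by (intro one_notin_sector) (auto simp: \<alpha>_def field_simps)
  ultimately show ?thesis
    using union[of \<alpha>] conj_iff by (rule prime_renorm_iffI)
qed


lemma fundamental_sector_ge_half:
  assumes "1/2 \<le> \<theta>" "fundamental_sector \<theta> \<alpha> Y"
  obtains \<alpha>' where "Y = sector (\<alpha>' + \<theta>) (1 - \<theta>)"
proof (cases "\<theta> = 1/2")
  case True
  have "Y = sector (\<alpha> + 1/2) (1/2) \<or> Y = sector (\<alpha> - 1/2 + 1/2) (1/2)"
    using assms(2) unfolding True fundamental_sector_def by auto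
  then show ?thesis
    using that[of \<alpha>] that[of "\<alpha> - 1/2"] unfolding True by auto
next
  case False
  then show ?thesis
    using assms that by (auto simp: fundamental_sector_def)
qed

lemma prime_renorm_ge_half:
  assumes "1/2 \<le> \<theta>" "\<theta> < 1"
  shows "prime_renorm \<theta> \<rho> \<longleftrightarrow> \<rho> - (2 * \<theta> - 1) / \<theta> \<in> \<int>"
proof -
  note Ym = first_return_sectors_ge_half(1)[OF assms] and Yp = first_return_sectors_ge_half(2)[OF assms]
    and union = first_return_sectors_ge_half(3)[OF assms]
  have conj_iff:
    "(\<forall>z \<in> closure (ball 0 1 - (Y \<union> rot (-\<theta>) ` Y)). glue \<beta> \<theta> (rot \<theta> z) = rot \<rho> (glue \<beta> \<theta> z)) \<and>
     (\<forall>z \<in> rot (-\<theta>) ` Y. glue \<beta> \<theta> (rot \<theta> (rot \<theta> z)) = rot \<rho> (glue \<beta> \<theta> z))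
     \<longleftrightarrow> \<rho> - (2 * \<theta> - 1) / \<theta> \<in> \<int>"
    if fs: "fundamental_sector \<theta> \<alpha> Y"
      and admissible: "rot (-\<theta>) ` Y \<union> closure (ball 0 1 - (Y \<union> rot (-\<theta>) ` Y)) = sector \<beta> \<theta>"
    for \<alpha> Y \<beta>
  proof -
    obtain \<alpha>' where Y: "Y = sector (\<alpha>' + \<theta>) (1 - \<theta>)"
      using fundamental_sector_ge_half[OF assms(1) fs] by blast
    then have "\<alpha>' - \<beta> \<in> \<int>"
      using admissible union assms by (intro sector_subset_imp_Ints[of _ \<theta>]) auto
    then have "sector \<alpha>' = sector \<beta>" "sector (\<alpha>' + (1 - \<theta>)) = sector (\<beta> + (1 - \<theta>))"
      by (auto intro!: ext sector_cong_Ints simp: algebra_simps)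
    moreover have "closure (ball 0 1 - (Y \<union> rot (-\<theta>) ` Y)) \<subseteq> sector (\<beta> + (1 - \<theta>)) (2 * \<theta> - 1)"
      using Yp[of \<alpha>'] unfolding Y calculation(2) .
    ultimately show ?thesis
      using glue_exchange_conj_iff[of "1 - \<theta>" "2 * \<theta> - 1" \<theta> "\<theta> + \<theta>" \<theta> _ \<beta> \<rho>] assms
      unfolding Y Ym by (auto simp: conj_commute)
  qed
  define \<alpha> where "\<alpha> = - \<theta> / 2"
  have "1 - sector_angle \<theta> = \<theta>"
    using assms by (simp add: sector_angle_def)
  moreover have "fundamental_sector \<theta> \<alpha> (sector (\<alpha> + \<theta>) (1 - \<theta>))"
    using assms by (simp add: fundamental_sector_def)
  moreover have "1 \<notin> sector (\<alpha> + \<theta>) (1 - \<theta>)"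
    using assms by (intro one_notin_sector) (auto simp: \<alpha>_def field_simps)
  ultimately show ?thesis
    using union[of \<alpha>] conj_iff by (rule prime_renorm_iffI)
qed

lemma prime_renorm_le_half:
  assumes "0 < \<theta>" "\<theta> \<le> 1/2"
  shows "prime_renorm \<theta> \<rho> \<longleftrightarrow> \<rho> - \<theta> / (1 - \<theta>) \<in> \<int>"
proof (cases "\<theta> = 1/2")
  case True
  have "\<rho> - 1 \<in> \<int> \<longleftrightarrow> \<rho> \<in> \<int>"
    by (metis Ints_1 Ints_add Ints_diff diff_add_cancel)
  then show ?thesis
    using prime_renorm_ge_half[of "1/2" \<rho>] unfolding True by simp
next
  case False
  then show ?thesis
    using prime_renorm_less_half assms by simp
qed

lemma cf_bounds: "\<forall>a \<in> set as. 0 < a \<Longrightarrow> 0 \<le> cf as \<and> cf as \<le> 1"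
proof (induction as)
  case Nil
  then show ?case by simp
next
  case (Cons a as)
  then have "0 \<le> cf as" "1 \<le> real a + cf as"
    by auto
  then show ?case
    by simp
qed

lemma cf_map_upt_Suc:
  "cf (map a [0..<Suc n]) = 1 / (real (a 0) + cf (map (\<lambda>i. a (Suc i)) [0..<n]))"
  by (simp add: upt_conv_Cons map_Suc_upt[symmetric] comp_def del: upt_Suc)

lemma cf_inf_val_Cons:
  assumes "cf_inf_val (\<lambda>i. a (Suc i)) y" "real (a 0) + y \<noteq> 0"
  shows "cf_inf_val a (1 / (real (a 0) + y))"
proof -
  have "(\<lambda>n. 1 / (real (a 0) + cf (map (\<lambda>i. a (Suc i)) [0..<n]))) \<longlonglongrightarrow> 1 / (real (a 0) + y)"
    using assms unfolding cf_inf_val_def by (intro tendsto_intros) auto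
  then show ?thesis
    unfolding cf_inf_val_def cf_map_upt_Suc[symmetric] by (rule LIMSEQ_imp_Suc)
qed

lemma cf_inf_val_tail:
  assumes pos: "\<forall>i. 0 < a i" and lim: "cf_inf_val a x"
  obtains y where "cf_inf_val (\<lambda>i. a (Suc i)) y" "0 \<le> y" "y \<le> 1" "x = 1 / (real (a 0) + y)"
proof -
  define g where "g n = cf (map (\<lambda>i. a (Suc i)) [0..<n])" for n
  have g: "0 \<le> g n" "g n \<le> 1" for n
    unfolding g_def using pos by (auto intro!: cf_bounds[THEN conjunct1] cf_bounds[THEN conjunct2])
  have a0: "1 \<le> real (a 0)"
    using pos by (simp add: Suc_le_eq)
  have f: "(\<lambda>n. 1 / (real (a 0) + g n)) \<longlonglongrightarrow> x"
    using LIMSEQ_Suc[OF lim[unfolded cf_inf_val_def]] unfolding cf_map_upt_Suc g_def .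
  have "1 / (real (a 0) + 1) \<le> 1 / (real (a 0) + g n)" for n
    using g[of n] a0 by (intro divide_left_mono) auto
  then have "1 / (real (a 0) + 1) \<le> x"
    by (intro LIMSEQ_le_const[OF f]) auto
  then have "0 < x"
    using a0 by (smt (verit) divide_pos_pos)
  have "(\<lambda>n. 1 / (1 / (real (a 0) + g n)) - real (a 0)) \<longlonglongrightarrow> 1 / x - real (a 0)"
    using \<open>0 < x\<close> by (intro tendsto_intros f) auto
  then have tail: "g \<longlonglongrightarrow> 1 / x - real (a 0)"
    using g a0 by (simp add: add_nonneg_eq_0_iff)
  show ?thesis
  proof
    show "cf_inf_val (\<lambda>i. a (Suc i)) (1 / x - real (a 0))"
      using tail unfolding cf_inf_val_def g_def .
    show "0 \<le> 1 / x - real (a 0)"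
      by (rule LIMSEQ_le_const[OF tail]) (use g in auto)
    show "1 / x - real (a 0) \<le> 1"
      by (rule LIMSEQ_le_const2[OF tail]) (use g in auto)
    show "x = 1 / (real (a 0) + (1 / x - real (a 0)))"
      using \<open>0 < x\<close> by simp
  qed
qed

lemma prime_renorm_reciprocal:
  fixes a c :: real
  assumes "0 \<le> c" "c \<le> 1" "\<theta> = 1 / (a + c)" "\<theta> < 1"
  shows "2 \<le> a \<Longrightarrow> prime_renorm \<theta> \<rho> \<longleftrightarrow> \<rho> - 1 / ((a - 1) + c) \<in> \<int>"
    and "a = 1 \<Longrightarrow> prime_renorm \<theta> \<rho> \<longleftrightarrow> \<rho> - (1 - c) \<in> \<int>"
proof -
  show "prime_renorm \<theta> \<rho> \<longleftrightarrow> \<rho> - 1 / ((a - 1) + c) \<in> \<int>" if "2 \<le> a"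
  proof -
    have "2 \<le> a + c"
      using assms that by simp
    then have "0 < 1 / (a + c)" "1 / (a + c) \<le> 1/2"
        "(1 / (a + c)) / (1 - 1 / (a + c)) = 1 / ((a - 1) + c)"
      by (auto simp: field_simps)
    then show ?thesis
      using prime_renorm_le_half unfolding assms(3) by simp
  qed
  show "prime_renorm \<theta> \<rho> \<longleftrightarrow> \<rho> - (1 - c) \<in> \<int>" if "a = 1"
  proof -
    have "1/2 \<le> 1 / (1 + c)" "(2 * (1 / (1 + c)) - 1) / (1 / (1 + c)) = 1 - c"
      using assms(1,2) by (auto simp: field_simps)
    then show ?thesis
      using prime_renorm_ge_half assms(4) unfolding assms(3) that by simp
  qed
qed

lemma prime_renorm_one_minus_reciprocal:
  fixes b c :: real
  assumes "0 \<le> c" "c \<le> 1" "\<theta> = 1 - 1 / (b + c)" "0 < \<theta>"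
  shows "2 \<le> b \<Longrightarrow> prime_renorm \<theta> \<rho> \<longleftrightarrow> \<rho> - (1 - 1 / ((b - 1) + c)) \<in> \<int>"
    and "b = 1 \<Longrightarrow> prime_renorm \<theta> \<rho> \<longleftrightarrow> \<rho> - c \<in> \<int>"
proof -
  show "prime_renorm \<theta> \<rho> \<longleftrightarrow> \<rho> - (1 - 1 / ((b - 1) + c)) \<in> \<int>" if "2 \<le> b"
  proof -
    have bc: "2 \<le> b + c"
      using assms that by simp
    have "(2 * (1 - 1 / u) - 1) / (1 - 1 / u) = 1 - 1 / (u - 1)" if "2 \<le> u" for u :: real
      using that by (simp add: field_simps)
    from this[OF bc] have "(2 * (1 - 1 / (b + c)) - 1) / (1 - 1 / (b + c)) = 1 - 1 / ((b - 1) + c)"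
      by (simp add: algebra_simps)
    moreover have "1/2 \<le> 1 - 1 / (b + c)" "1 - 1 / (b + c) < 1"
      using bc by (auto simp: field_simps)
    ultimately show ?thesis
      using prime_renorm_ge_half unfolding assms(3) by simp
  qed
  show "prime_renorm \<theta> \<rho> \<longleftrightarrow> \<rho> - c \<in> \<int>" if "b = 1"
  proof -
    have "1 - 1 / (1 + c) \<le> 1/2" "(1 - 1 / (1 + c)) / (1 - (1 - 1 / (1 + c))) = c"
      using assms(1,2) by (auto simp: field_simps)
    then show ?thesis
      using prime_renorm_le_half assms(4) unfolding assms(3) that by simp
  qed
qed

lemma prime_renorm_cf_Cons:
  assumes "\<theta> < 1" "0 < a1" "\<forall>a \<in> set as. 0 < a" "\<theta> = cf (a1 # as)"
  shows "1 < a1 \<Longrightarrow> prime_renorm \<theta> \<rho> \<longleftrightarrow> \<rho> - cf ((a1 - 1) # as) \<in> \<int>"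
    and "a1 = 1 \<Longrightarrow> prime_renorm \<theta> \<rho> \<longleftrightarrow> \<rho> - (1 - cf as) \<in> \<int>"
  using prime_renorm_reciprocal[of "cf as" \<theta> "real a1"] cf_bounds[OF assms(3)] assms
  by auto

lemma prime_renorm_one_minus_cf_Cons:
  assumes "0 < \<theta>" "0 < b1" "\<forall>b \<in> set bs. 0 < b" "\<theta> = 1 - cf (b1 # bs)"
  shows "1 < b1 \<Longrightarrow> prime_renorm \<theta> \<rho> \<longleftrightarrow> \<rho> - (1 - cf ((b1 - 1) # bs)) \<in> \<int>"
    and "b1 = 1 \<Longrightarrow> prime_renorm \<theta> \<rho> \<longleftrightarrow> \<rho> - cf bs \<in> \<int>"
  using prime_renorm_one_minus_reciprocal[of "cf bs" \<theta> "real b1"] cf_bounds[OF assms(3)] assms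
  by auto

lemma prime_renorm_cf_inf:
  assumes "\<theta> < 1" "\<forall>i. 0 < a i" "cf_inf_val a \<theta>"
  shows "1 < a 0 \<Longrightarrow> \<exists>x. cf_inf_val (a(0 := a 0 - 1)) x \<and> (\<forall>\<rho>. prime_renorm \<theta> \<rho> \<longleftrightarrow> \<rho> - x \<in> \<int>)"
    and "a 0 = 1 \<Longrightarrow> \<exists>x. cf_inf_val (\<lambda>i. a (Suc i)) x \<and> (\<forall>\<rho>. prime_renorm \<theta> \<rho> \<longleftrightarrow> \<rho> - (1 - x) \<in> \<int>)"
proof -
  obtain y where y: "cf_inf_val (\<lambda>i. a (Suc i)) y" "0 \<le> y" "y \<le> 1" "\<theta> = 1 / (real (a 0) + y)"
    using cf_inf_val_tail assms(2,3) by blast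
  show "\<exists>x. cf_inf_val (a(0 := a 0 - 1)) x \<and> (\<forall>\<rho>. prime_renorm \<theta> \<rho> \<longleftrightarrow> \<rho> - x \<in> \<int>)" if "1 < a 0"
  proof (intro exI conjI allI)
    show "cf_inf_val (a(0 := a 0 - 1)) (1 / ((real (a 0) - 1) + y))"
      using cf_inf_val_Cons[of "a(0 := a 0 - 1)" y] y that by simp
    show "prime_renorm \<theta> \<rho> \<longleftrightarrow> \<rho> - 1 / ((real (a 0) - 1) + y) \<in> \<int>" for \<rho>
      using prime_renorm_reciprocal(1)[OF y(2-4) assms(1)] that by simp
  qed
  show "\<exists>x. cf_inf_val (\<lambda>i. a (Suc i)) x \<and> (\<forall>\<rho>. prime_renorm \<theta> \<rho> \<longleftrightarrow> \<rho> - (1 - x) \<in> \<int>)" if "a 0 = 1"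
    using prime_renorm_reciprocal(2)[OF y(2-4) assms(1)] y(1) that by auto
qed

lemma prime_renorm_one_minus_cf_inf:
  assumes "0 < \<theta>" "\<forall>i. 0 < b i" "cf_inf_val b (1 - \<theta>)"
  shows "1 < b 0 \<Longrightarrow> \<exists>x. cf_inf_val (b(0 := b 0 - 1)) x \<and> (\<forall>\<rho>. prime_renorm \<theta> \<rho> \<longleftrightarrow> \<rho> - (1 - x) \<in> \<int>)"
    and "b 0 = 1 \<Longrightarrow> \<exists>x. cf_inf_val (\<lambda>i. b (Suc i)) x \<and> (\<forall>\<rho>. prime_renorm \<theta> \<rho> \<longleftrightarrow> \<rho> - x \<in> \<int>)"
proof -
  obtain y where y: "cf_inf_val (\<lambda>i. b (Suc i)) y" "0 \<le> y" "y \<le> 1" "1 - \<theta> = 1 / (real (b 0) + y)"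
    using cf_inf_val_tail assms(2,3) by blast
  then have \<theta>: "\<theta> = 1 - 1 / (real (b 0) + y)"
    by simp
  show "\<exists>x. cf_inf_val (b(0 := b 0 - 1)) x \<and> (\<forall>\<rho>. prime_renorm \<theta> \<rho> \<longleftrightarrow> \<rho> - (1 - x) \<in> \<int>)" if "1 < b 0"
  proof (intro exI conjI allI)
    show "cf_inf_val (b(0 := b 0 - 1)) (1 / ((real (b 0) - 1) + y))"
      using cf_inf_val_Cons[of "b(0 := b 0 - 1)" y] y that by simp
    show "prime_renorm \<theta> \<rho> \<longleftrightarrow> \<rho> - (1 - 1 / ((real (b 0) - 1) + y)) \<in> \<int>" for \<rho>
      using prime_renorm_one_minus_reciprocal(1)[OF y(2,3) \<theta> assms(1)] that by simp
  qed
  show "\<exists>x. cf_inf_val (\<lambda>i. b (Suc i)) x \<and> (\<forall>\<rho>. prime_renorm \<theta> \<rho> \<longleftrightarrow> \<rho> - x \<in> \<int>)" if "b 0 = 1"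
    using prime_renorm_one_minus_reciprocal(2)[OF y(2,3) \<theta> assms(1)] y(1) that by auto
qed

theorem lemmaA1:
  fixes \<theta> :: real
  assumes "0 < \<theta>" and "\<theta> < 1"
  shows
   "(\<theta> \<le> 1/2 \<longrightarrow> (\<forall>\<rho>. prime_renorm \<theta> \<rho> \<longleftrightarrow> \<rho> - \<theta> / (1 - \<theta>) \<in> \<int>)) \<and>
    (1/2 \<le> \<theta> \<longrightarrow> (\<forall>\<rho>. prime_renorm \<theta> \<rho> \<longleftrightarrow> \<rho> - (2 * \<theta> - 1) / \<theta> \<in> \<int>)) \<and>
    (\<forall>a1 as. 0 < a1 \<and> (\<forall>a \<in> set as. 0 < a) \<and> \<theta> = cf (a1 # as) \<longrightarrow>
       (1 < a1 \<longrightarrow> (\<forall>\<rho>. prime_renorm \<theta> \<rho> \<longleftrightarrow> \<rho> - cf ((a1 - 1) # as) \<in> \<int>)) \<and>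
       (a1 = 1 \<longrightarrow> (\<forall>\<rho>. prime_renorm \<theta> \<rho> \<longleftrightarrow> \<rho> - (1 - cf as) \<in> \<int>))) \<and>
    (\<forall>b1 bs. 0 < b1 \<and> (\<forall>b \<in> set bs. 0 < b) \<and> \<theta> = 1 - cf (b1 # bs) \<longrightarrow>
       (1 < b1 \<longrightarrow> (\<forall>\<rho>. prime_renorm \<theta> \<rho> \<longleftrightarrow> \<rho> - (1 - cf ((b1 - 1) # bs)) \<in> \<int>)) \<and>
       (b1 = 1 \<longrightarrow> (\<forall>\<rho>. prime_renorm \<theta> \<rho> \<longleftrightarrow> \<rho> - cf bs \<in> \<int>))) \<and>
    (\<forall>a :: nat \<Rightarrow> nat. (\<forall>i. 0 < a i) \<and> cf_inf_val a \<theta> \<longrightarrow>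
       (1 < a 0 \<longrightarrow> (\<exists>x. cf_inf_val (a(0 := a 0 - 1)) x \<and>
                         (\<forall>\<rho>. prime_renorm \<theta> \<rho> \<longleftrightarrow> \<rho> - x \<in> \<int>))) \<and>
       (a 0 = 1 \<longrightarrow> (\<exists>x. cf_inf_val (\<lambda>i. a (Suc i)) x \<and>
                         (\<forall>\<rho>. prime_renorm \<theta> \<rho> \<longleftrightarrow> \<rho> - (1 - x) \<in> \<int>)))) \<and>
    (\<forall>b :: nat \<Rightarrow> nat. (\<forall>i. 0 < b i) \<and> cf_inf_val b (1 - \<theta>) \<longrightarrow>
       (1 < b 0 \<longrightarrow> (\<exists>x. cf_inf_val (b(0 := b 0 - 1)) x \<and>
                         (\<forall>\<rho>. prime_renorm \<theta> \<rho> \<longleftrightarrow> \<rho> - (1 - x) \<in> \<int>))) \<and>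
       (b 0 = 1 \<longrightarrow> (\<exists>x. cf_inf_val (\<lambda>i. b (Suc i)) x \<and>
                         (\<forall>\<rho>. prime_renorm \<theta> \<rho> \<longleftrightarrow> \<rho> - x \<in> \<int>))))"
  by (intro conjI allI impI; (elim conjE)?;
      rule prime_renorm_le_half[OF assms(1)] prime_renorm_ge_half[OF _ assms(2)]
        prime_renorm_cf_Cons[OF assms(2)] prime_renorm_one_minus_cf_Cons[OF assms(1)]
        prime_renorm_cf_inf[OF assms(2)] prime_renorm_one_minus_cf_inf[OF assms(1)];
      assumption)

end
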